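(* Let $1\le d\le D$ be integers, let $k$ be a field with $|k|\ge D+1$, let $A$ be a $k$-algebra and let $a_1,\ldots,a_m\in A$. Assume that for all $\alpha_1,\ldots,\alpha_m\in k$ the element $\alpha_1a_1+\cdots+\alpha_ma_m$ is algebraic over $k$ of degree at most $d$. Then $P_D(a_1,\ldots,a_m)\subseteq P_{\le d-1}(a_1,\ldots,a_m)$.
   Context: Algebras are associative with unit. For nonnegative integers $i_1,\ldots,i_m$, $p_{i_1,\ldots,i_m}(x_1,\ldots,x_m)$ is the sum of all distinct noncommutative monomials with exactly $i_j$ occurrences of $x_j$ for each $j$ ($p_{0,\ldots,0}=1$); $p_{i_1,\ldots,i_m}(a_1,\ldots,a_m)$ is its evaluation at $x_j=a_j$. $P_n(a_1,\ldots,a_m)=\operatorname{span}_k\{p_{i_1,\ldots,i_m}(a_1,\ldots,a_m)\mid i_1+\cdots+i_m=n\}$ and $P_{\le r}(a_1,\ldots,a_m)=\sum_{n=0}^rP_n(a_1,\ldots,a_m)$. An element $u$ is algebraic of degree at most $d$ if it is a root of a nonzero polynomial in $k[t]$ of degree at most $d$. *)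

theory Defs
  imports Main "HOL-Computational_Algebra.Polynomial"
begin

definition is_algebra :: "('k::field \<Rightarrow> 'b::ring_1 \<Rightarrow> 'b) \<Rightarrow> bool" where
  "is_algebra scale \<longleftrightarrow> vector_space scale \<and>
     (\<forall>c x y. scale c (x * y) = scale c x * y \<and> scale c (x * y) = x * scale c y)"

definition alg_eval :: "('k::field \<Rightarrow> 'b::ring_1 \<Rightarrow> 'b) \<Rightarrow> 'k poly \<Rightarrow> 'b \<Rightarrow> 'b" where
  "alg_eval scale p u = (\<Sum>j\<le>degree p. scale (coeff p j) (u ^ j))"

definition algebraic_deg_le :: "('k::field \<Rightarrow> 'b::ring_1 \<Rightarrow> 'b) \<Rightarrow> nat \<Rightarrow> 'b \<Rightarrow> bool" where
  "algebraic_deg_le scale d u \<longleftrightarrow> (\<exists>p. p \<noteq> 0 \<and> degree p \<le> d \<and> alg_eval scale p u = 0)"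

text \<open>Noncommutative monomials in x_0..x_{m-1} are words (lists) over {..<m};
the word w evaluates to the product of a (w!0) * a (w!1) * ... .
p_i(a) is the sum over all distinct words with exactly i j occurrences of x_j (j<m).\<close>
definition words :: "nat \<Rightarrow> (nat \<Rightarrow> nat) \<Rightarrow> nat list set" where
  "words m i = {w. set w \<subseteq> {..<m} \<and> (\<forall>j<m. count_list w j = i j)}"

definition pnc :: "nat \<Rightarrow> (nat \<Rightarrow> nat) \<Rightarrow> (nat \<Rightarrow> 'b::ring_1) \<Rightarrow> 'b" where
  "pnc m i a = (\<Sum>w\<in>words m i. prod_list (map a w))"

definition Pn :: "('k::field \<Rightarrow> 'b::ring_1 \<Rightarrow> 'b) \<Rightarrow> nat \<Rightarrow> (nat \<Rightarrow> 'b) \<Rightarrow> nat \<Rightarrow> 'b set" where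
  "Pn scale m a n = module.span scale {pnc m i a | i. (\<Sum>j<m. i j) = n}"

definition Ple :: "('k::field \<Rightarrow> 'b::ring_1 \<Rightarrow> 'b) \<Rightarrow> nat \<Rightarrow> (nat \<Rightarrow> 'b) \<Rightarrow> nat \<Rightarrow> 'b set" where
  "Ple scale m a r = {x. \<exists>f. (\<forall>n\<le>r. f n \<in> Pn scale m a n) \<and> x = (\<Sum>n\<le>r. f n)}"

end

theory Submission
  imports Defs
begin

text \<open>For \<open>\<alpha> \<in> k\<^sup>m\<close> put \<open>u = \<Sum>\<^sub>j \<alpha> j a j\<close>. A relation of degree \<open>e \<le> d\<close>, divided by
its leading coefficient, makes the span of \<open>1, u, \<dots>, u ^ (e - 1)\<close> closed under multiplication
by \<open>u\<close>, so \<open>u ^ D\<close> lies in \<open>P_{\<le>d-1}\<close>. Expanded noncommutatively, \<open>u ^ D = \<Sum>\<^sub>i \<alpha>^i p_i(a)\<close>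
is a polynomial in \<open>\<alpha>\<close> of degree at most \<open>D\<close> in each variable whose coefficients span \<open>P_D\<close>.
Its values all lie in the subspace \<open>P_{\<le>d-1}\<close>, and \<open>k\<close> has \<open>D + 1\<close> points, so Lagrange
interpolation, one variable at a time, writes each coefficient as a combination of values and
thus places it in \<open>P_{\<le>d-1}\<close> too.\<close>

lemma interpolation_coeff_functional:
  fixes S :: "'k::field set"
  assumes fin: "finite S" and card_S: "card S = Suc D" and "e \<le> D"
  shows "\<exists>c. \<forall>e'\<le>D. (\<Sum>s\<in>S. c s * s ^ e') = (if e' = e then 1 else 0)"
proof -
  define L where "L s = smult (1 / (\<Prod>s'\<in>S-{s}. (s - s'))) (\<Prod>s'\<in>S-{s}. [:-s', 1:])" for s
  have poly_L: "poly (L s) t = (if t = s then 1 else 0)" if "s \<in> S" "t \<in> S" for s t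
  proof (cases "t = s")
    case True
    have "(\<Prod>s'\<in>S-{s}. (s - s')) \<noteq> 0" using fin by (simp add: prod_zero_iff)
    then show ?thesis using True by (simp add: L_def poly_prod)
  next
    case False
    have "(\<Prod>s'\<in>S-{s}. (t - s')) = 0" using fin that False
      by (subst prod_zero_iff) auto
    then show ?thesis using False by (simp add: L_def poly_prod)
  qed
  have degree_L: "degree (L s) \<le> D" if "s \<in> S" for s
  proof -
    have "degree (\<Prod>s'\<in>S-{s}. [:-s', 1:]) \<le> sum (degree \<circ> (\<lambda>s'. [:-s', 1:])) (S - {s})"
      using fin by (intro degree_prod_sum_le) auto
    also have "\<dots> = D" using card_S fin that by simp
    finally show ?thesis by (simp add: L_def)
  qed
  show ?thesis
  proof (intro exI allI impI)
    fix e' assume "e' \<le> D"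
    have monom_interpolation: "monom 1 e' = (\<Sum>s\<in>S. smult (s ^ e') (L s))"
    proof (rule poly_eqI_degree[of S])
      fix t assume t: "t \<in> S"
      have "poly (\<Sum>s\<in>S. smult (s ^ e') (L s)) t = (\<Sum>s\<in>S. s ^ e' * (if t = s then 1 else 0))"
        by (simp add: poly_sum poly_L t)
      also have "\<dots> = t ^ e'" using fin t by (simp add: if_distrib[of "(*) _"] cong: if_cong)
      finally show "poly (monom 1 e') t = poly (\<Sum>s\<in>S. smult (s ^ e') (L s)) t"
        by (simp add: poly_monom)
    next
      show "degree (monom (1::'k) e') < card S" using \<open>e' \<le> D\<close> card_S by (simp add: degree_monom_eq)
    next
      have "degree (\<Sum>s\<in>S. smult (s ^ e') (L s)) \<le> D"
        using fin by (intro degree_sum_le) (auto intro: order.trans[OF degree_smult_le] degree_L)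
      then show "degree (\<Sum>s\<in>S. smult (s ^ e') (L s)) < card S" using card_S by simp
    qed
    have "coeff (monom 1 e') e = (\<Sum>s\<in>S. s ^ e' * coeff (L s) e)"
      by (subst monom_interpolation) (simp add: coeff_sum)
    then show "(\<Sum>s\<in>S. coeff (L s) e * s ^ e') = (if e' = e then 1 else 0)"
      by (simp add: coeff_monom mult.commute)
  qed
qed

definition bounded_exps :: "nat \<Rightarrow> nat \<Rightarrow> (nat \<Rightarrow> nat) set" where
  "bounded_exps D m = {i. (\<forall>j. i j \<le> D) \<and> (\<forall>j\<ge>m. i j = 0)}"

text \<open>Exponent vectors vanish from \<open>m\<close> on; \<open>pnc m i a\<close> only depends on \<open>i\<close> below \<open>m\<close>
(\<open>words_cong\<close>), so this loses nothing.\<close>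

definition degree_exps :: "nat \<Rightarrow> nat \<Rightarrow> (nat \<Rightarrow> nat) set" where
  "degree_exps m n = {i. (\<Sum>j<m. i j) = n \<and> (\<forall>j\<ge>m. i j = 0)}"

definition monomial_value :: "(nat \<Rightarrow> 'k::comm_semiring_1) \<Rightarrow> (nat \<Rightarrow> nat) \<Rightarrow> nat \<Rightarrow> 'k" where
  "monomial_value \<alpha> i m = (\<Prod>j<m. \<alpha> j ^ i j)"

lemma bounded_exps_0: "bounded_exps D 0 = {\<lambda>_. 0}"
  by (auto simp: bounded_exps_def)

lemma bounded_exps_Suc:
  "bounded_exps D (Suc m) = (\<lambda>(i, e). i(m := e)) ` (bounded_exps D m \<times> {..D})"
proof (intro equalityI subsetI)
  fix i assume "i \<in> bounded_exps D (Suc m)"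
  then have "(i(m := 0), i m) \<in> bounded_exps D m \<times> {..D}"
    by (auto simp: bounded_exps_def)
  then show "i \<in> (\<lambda>(i, e). i(m := e)) ` (bounded_exps D m \<times> {..D})"
    by (intro image_eqI[where x="(i(m := 0), i m)"]) auto
qed (auto simp: bounded_exps_def)

lemma inj_on_bounded_exps_upd: "inj_on (\<lambda>(i, e). i(m := e)) (bounded_exps D m \<times> {..D})"
proof (rule inj_onI, clarsimp)
  fix i e i' e' assume "i \<in> bounded_exps D m" "i' \<in> bounded_exps D m" "i(m := e) = i'(m := e')"
  then show "i = i' \<and> e = e'"
    by (auto simp: bounded_exps_def fun_eq_iff) (metis fun_upd_apply order_refl)+
qed

lemma finite_bounded_exps: "finite (bounded_exps D m)"
  by (induction m) (auto simp: bounded_exps_0 bounded_exps_Suc)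

lemma sum_bounded_exps_Suc:
  "(\<Sum>i\<in>bounded_exps D (Suc m). f i) = (\<Sum>e\<le>D. \<Sum>i\<in>bounded_exps D m. f (i(m := e)))"
proof -
  have "(\<Sum>i\<in>bounded_exps D (Suc m). f i) = (\<Sum>(i, e)\<in>bounded_exps D m \<times> {..D}. f (i(m := e)))"
    unfolding bounded_exps_Suc
    by (subst sum.reindex[OF inj_on_bounded_exps_upd]) (simp add: case_prod_unfold)
  also have "\<dots> = (\<Sum>e\<le>D. \<Sum>i\<in>bounded_exps D m. f (i(m := e)))"
    by (subst sum.swap) (simp add: sum.cartesian_product)
  finally show ?thesis .
qed

lemma monomial_value_upd:
  "i \<in> bounded_exps D m \<Longrightarrow> monomial_value \<alpha> (i(m := e)) (Suc m) = \<alpha> m ^ e * monomial_value \<alpha> i m"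
  by (simp add: monomial_value_def bounded_exps_def mult.commute)

lemma monomial_value_upd_var: "monomial_value (\<alpha>(m := t)) i m = monomial_value \<alpha> i m"
  by (simp add: monomial_value_def)

lemma degree_exps_subset_bounded_exps: "degree_exps m n \<subseteq> bounded_exps n m"
proof
  fix i assume i: "i \<in> degree_exps m n"
  have "i j \<le> n" for j
  proof (cases "j < m")
    case True
    then have "i j \<le> (\<Sum>j<m. i j)" by (intro member_le_sum) auto
    then show ?thesis using i by (simp add: degree_exps_def)
  qed (use i in \<open>simp add: degree_exps_def\<close>)
  then show "i \<in> bounded_exps n m" using i by (simp add: degree_exps_def bounded_exps_def)
qed

lemma finite_degree_exps: "finite (degree_exps m n)"
  using finite_subset[OF degree_exps_subset_bounded_exps finite_bounded_exps] .

subsection \<open>Coefficient extraction in a subspace\<close>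

locale field_algebra = vector_space scale for scale :: "'k::field \<Rightarrow> 'b::ring_1 \<Rightarrow> 'b" +
  assumes scale_mult_left: "scale c (x * y) = scale c x * y"
    and scale_mult_right: "scale c (x * y) = x * scale c y"

lemma field_algebra_if_is_algebra: "is_algebra scale \<Longrightarrow> field_algebra scale"
  unfolding is_algebra_def field_algebra_def field_algebra_axioms_def by blast

context field_algebra
begin

lemma univariate_coeff_in_subspace:
  assumes W: "subspace W" and fin: "finite S" and card_S: "card S = Suc D"
    and values_in_W: "\<And>t. t \<in> S \<Longrightarrow> (\<Sum>e\<le>D. scale (t ^ e) (w e)) \<in> W"
    and "e \<le> D"
  shows "w e \<in> W"
proof -
  obtain c where c: "\<And>e'. e' \<le> D \<Longrightarrow> (\<Sum>s\<in>S. c s * s ^ e') = (if e' = e then 1 else 0)"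
    using interpolation_coeff_functional[OF fin card_S \<open>e \<le> D\<close>] by blast
  have "(\<Sum>s\<in>S. scale (c s) (\<Sum>e'\<le>D. scale (s ^ e') (w e'))) \<in> W"
    using values_in_W by (intro subspace_sum[OF W]) (simp add: subspace_scale[OF W])
  also have "(\<Sum>s\<in>S. scale (c s) (\<Sum>e'\<le>D. scale (s ^ e') (w e')))
      = (\<Sum>e'\<le>D. scale (\<Sum>s\<in>S. c s * s ^ e') (w e'))"
    by (simp add: scale_sum_right scale_sum_left sum.swap[of _ S])
  also have "\<dots> = (\<Sum>e'\<le>D. scale (if e' = e then 1 else 0) (w e'))"
    by (intro sum.cong) (auto simp: c)
  also have "\<dots> = w e" using \<open>e \<le> D\<close>
    by (simp add: if_distrib[of "\<lambda>x. scale x _"] cong: if_cong)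
  finally show ?thesis .
qed

lemma multivariate_coeff_in_subspace:
  assumes W: "subspace W" and fin: "finite (S :: 'k set)" and card_S: "card S = Suc D"
  shows "(\<forall>\<alpha>. (\<Sum>i\<in>bounded_exps D m. scale (monomial_value \<alpha> i m) (v i)) \<in> W)
    \<Longrightarrow> i \<in> bounded_exps D m \<Longrightarrow> v i \<in> W"
proof (induction m arbitrary: v i)
  case 0
  have "i = (\<lambda>_. 0)"
    using "0.prems"(2) by (simp add: bounded_exps_0)
  moreover have "(\<Sum>i\<in>bounded_exps D 0. scale (monomial_value (\<lambda>_. 1) i 0) (v i)) \<in> W"
    using "0.prems"(1) by blast
  ultimately show ?case
    by (simp add: bounded_exps_0 monomial_value_def)
next
  case (Suc m)
  define w where "w e \<alpha> = (\<Sum>i\<in>bounded_exps D m. scale (monomial_value \<alpha> i m) (v (i(m := e))))"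
    for e \<alpha>
  have expand: "(\<Sum>i\<in>bounded_exps D (Suc m). scale (monomial_value \<alpha> i (Suc m)) (v i))
      = (\<Sum>e\<le>D. scale (\<alpha> m ^ e) (w e \<alpha>))" for \<alpha>
  proof -
    have "(\<Sum>i\<in>bounded_exps D (Suc m). scale (monomial_value \<alpha> i (Suc m)) (v i))
        = (\<Sum>e\<le>D. \<Sum>i\<in>bounded_exps D m.
            scale (monomial_value \<alpha> (i(m := e)) (Suc m)) (v (i(m := e))))"
      by (rule sum_bounded_exps_Suc)
    also have "\<dots> = (\<Sum>e\<le>D. \<Sum>i\<in>bounded_exps D m.
            scale (\<alpha> m ^ e) (scale (monomial_value \<alpha> i m) (v (i(m := e)))))"
      by (intro sum.cong refl) (simp add: monomial_value_upd)
    also have "\<dots> = (\<Sum>e\<le>D. scale (\<alpha> m ^ e) (w e \<alpha>))"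
      by (simp add: w_def scale_sum_right)
    finally show ?thesis .
  qed
  have w_in_W: "w e \<alpha> \<in> W" if "e \<le> D" for e \<alpha>
  proof (rule univariate_coeff_in_subspace[OF W fin card_S _ that])
    fix t
    have "(\<Sum>i\<in>bounded_exps D (Suc m). scale (monomial_value (\<alpha>(m := t)) i (Suc m)) (v i)) \<in> W"
      using Suc.prems(1) by blast
    then show "(\<Sum>e\<le>D. scale (t ^ e) (w e \<alpha>)) \<in> W"
      unfolding expand w_def monomial_value_upd_var by simp
  qed
  have v_upd_in_W: "v (i(m := e)) \<in> W" if "i \<in> bounded_exps D m" "e \<le> D" for i e
  proof (rule Suc.IH[where v="\<lambda>i. v (i(m := e))"])
    show "\<forall>\<alpha>. (\<Sum>i\<in>bounded_exps D m. scale (monomial_value \<alpha> i m) (v (i(m := e)))) \<in> W"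
      using w_in_W[OF \<open>e \<le> D\<close>] unfolding w_def by blast
  qed (rule that(1))
  obtain i' e where i': "i' \<in> bounded_exps D m" "e \<le> D" and i_eq: "i = i'(m := e)"
    using Suc.prems(2) unfolding bounded_exps_Suc by auto
  show ?case
    unfolding i_eq by (rule v_upd_in_W[OF i'])
qed

end

subsection \<open>Noncommutative multinomial expansion\<close>

definition words_of_length :: "nat \<Rightarrow> nat \<Rightarrow> nat list set" where
  "words_of_length m n = {w. set w \<subseteq> {..<m} \<and> length w = n}"

definition letter_counts :: "nat \<Rightarrow> nat list \<Rightarrow> nat \<Rightarrow> nat" where
  "letter_counts m w j = (if j < m then count_list w j else 0)"

lemma finite_words_of_length: "finite (words_of_length m n)"
  unfolding words_of_length_def by (rule finite_lists_length_eq) simp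

lemma words_of_length_Suc:
  "words_of_length m (Suc n) = (\<lambda>(x, w). x # w) ` ({..<m} \<times> words_of_length m n)"
proof (intro equalityI subsetI)
  fix w assume "w \<in> words_of_length m (Suc n)"
  then obtain x w' where "w = x # w'" "x < m" "w' \<in> words_of_length m n"
    by (cases w) (auto simp: words_of_length_def)
  then show "w \<in> (\<lambda>(x, w). x # w) ` ({..<m} \<times> words_of_length m n)"
    by (intro image_eqI[where x="(x, w')"]) auto
qed (auto simp: words_of_length_def)

lemma length_eq_sum_count_list:
  "set w \<subseteq> X \<Longrightarrow> finite X \<Longrightarrow> length w = (\<Sum>x\<in>X. count_list w x)"
proof (induction w)
  case (Cons y w)
  then have "(\<Sum>x\<in>X. count_list (y # w) x) = (\<Sum>x\<in>X. count_list w x + (if y = x then 1 else 0))"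
    by (intro sum.cong) auto
  also have "\<dots> = (\<Sum>x\<in>X. count_list w x) + 1"
    using Cons.prems by (simp add: sum.distrib)
  finally show ?case using Cons by simp
qed simp

lemma prod_list_map_eq_monomial_value:
  fixes \<alpha> :: "nat \<Rightarrow> 'k::comm_semiring_1"
  shows "set w \<subseteq> {..<m} \<Longrightarrow> prod_list (map \<alpha> w) = monomial_value \<alpha> (letter_counts m w) m"
proof (induction w)
  case (Cons y w)
  then have "monomial_value \<alpha> (letter_counts m (y # w)) m
      = (\<Prod>j<m. \<alpha> j ^ count_list w j * (if y = j then \<alpha> j else 1))"
    by (auto simp: monomial_value_def letter_counts_def power_add mult.commute intro!: prod.cong)
  also have "\<dots> = monomial_value \<alpha> (letter_counts m w) m * \<alpha> y"
    using Cons.prems by (simp add: prod.distrib monomial_value_def letter_counts_def)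
  finally show ?case using Cons by (simp add: mult.commute)
qed (simp add: monomial_value_def letter_counts_def)

lemma letter_counts_in_degree_exps:
  "w \<in> words_of_length m n \<Longrightarrow> letter_counts m w \<in> degree_exps m n"
  using length_eq_sum_count_list[of w "{..<m}"]
  by (simp add: words_of_length_def degree_exps_def letter_counts_def)

lemma words_eq_fiber_letter_counts:
  assumes "i \<in> degree_exps m n"
  shows "words m i = {w \<in> words_of_length m n. letter_counts m w = i}"
proof (intro equalityI subsetI)
  fix w assume w: "w \<in> words m i"
  have "length w = (\<Sum>j<m. count_list w j)"
    using w by (intro length_eq_sum_count_list) (auto simp: words_def)
  also have "\<dots> = n" using w assms by (simp add: words_def degree_exps_def)
  finally show "w \<in> {w \<in> words_of_length m n. letter_counts m w = i}"
    using w assms by (auto simp: words_of_length_def words_def letter_counts_def degree_exps_def)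
qed (auto simp: words_of_length_def words_def letter_counts_def)

lemma words_cong: "(\<And>j. j < m \<Longrightarrow> i j = i' j) \<Longrightarrow> words m i = words m i'"
  by (simp add: words_def)

context field_algebra
begin

lemma scale_mult_scale: "scale c x * scale c' y = scale (c * c') (x * y)"
  by (metis scale_mult_left scale_mult_right scale_scale)

lemma power_linear_combination_words:
  "(\<Sum>j<m. scale (\<alpha> j) (a j)) ^ n
    = (\<Sum>w\<in>words_of_length m n. scale (prod_list (map \<alpha> w)) (prod_list (map a w)))"
proof (induction n)
  case 0
  have "words_of_length m 0 = {[]}" by (auto simp: words_of_length_def)
  then show ?case by simp
next
  case (Suc n)
  have "(\<Sum>j<m. scale (\<alpha> j) (a j)) ^ Suc n
     = (\<Sum>j<m. \<Sum>w\<in>words_of_length m n.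
          scale (\<alpha> j * prod_list (map \<alpha> w)) (a j * prod_list (map a w)))"
    by (simp add: Suc sum_distrib_left sum_distrib_right scale_mult_scale) (rule sum.swap)
  also have "\<dots> = (\<Sum>(j, w)\<in>{..<m} \<times> words_of_length m n.
          scale (prod_list (map \<alpha> (j # w))) (prod_list (map a (j # w))))"
    by (simp add: sum.cartesian_product)
  also have "\<dots> = (\<Sum>w\<in>words_of_length m (Suc n). scale (prod_list (map \<alpha> w)) (prod_list (map a w)))"
    unfolding words_of_length_Suc by (subst sum.reindex) (auto intro: inj_onI simp: case_prod_unfold)
  finally show ?case .
qed

lemma power_linear_combination_pnc:
  "(\<Sum>j<m. scale (\<alpha> j) (a j)) ^ n = (\<Sum>i\<in>degree_exps m n. scale (monomial_value \<alpha> i m) (pnc m i a))"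
proof -
  have "(\<Sum>j<m. scale (\<alpha> j) (a j)) ^ n
     = (\<Sum>i\<in>degree_exps m n. \<Sum>w\<in>{w \<in> words_of_length m n. letter_counts m w = i}.
          scale (prod_list (map \<alpha> w)) (prod_list (map a w)))"
    unfolding power_linear_combination_words
    by (rule sum.group[OF finite_words_of_length finite_degree_exps, symmetric])
      (auto intro: letter_counts_in_degree_exps)
  also have "\<dots> = (\<Sum>i\<in>degree_exps m n. \<Sum>w\<in>words m i. scale (monomial_value \<alpha> i m) (prod_list (map a w)))"
    by (intro sum.cong refl)
      (auto simp: words_eq_fiber_letter_counts words_of_length_def prod_list_map_eq_monomial_value)
  also have "\<dots> = (\<Sum>i\<in>degree_exps m n. scale (monomial_value \<alpha> i m) (pnc m i a))"
    by (simp add: pnc_def scale_sum_right)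
  finally show ?thesis .
qed

subsection \<open>Powers of an algebraic element\<close>

lemma power_in_span_lower_powers:
  assumes "u ^ e \<in> span {u ^ j | j. j < e}"
  shows "u ^ n \<in> span {u ^ j | j. j < e}"
proof -
  define T where "T = span {u ^ j | j. j < e}"
  have mult_closed: "u * x \<in> T" if "x \<in> T" for x
    using that[unfolded T_def]
  proof (induction rule: span_induct_alt)
    case base
    then show ?case by (simp add: T_def span_zero)
  next
    case (step c x y)
    then obtain j where j: "x = u ^ j" "j < e" by auto
    have "u * x \<in> T"
    proof (cases "Suc j < e")
      case True
      then have "u * x \<in> {u ^ j | j. j < e}"
        using j by (intro CollectI exI[of _ "Suc j"]) simp
      then show ?thesis unfolding T_def by (rule span_base)
    next
      case False
      then have "e = Suc j" using j by simp
      then have "u * x = u ^ e" using j by simp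
      then show ?thesis using assms by (simp add: T_def)
    qed
    moreover have "u * (scale c x + y) = scale c (u * x) + u * y"
      by (simp add: distrib_left scale_mult_right)
    ultimately show ?case using step.IH unfolding T_def by (simp add: span_add span_scale)
  qed
  have "u ^ n \<in> T" for n
  proof (induction n)
    case 0
    show ?case
    proof (cases "e = 0")
      case True
      then show ?thesis using assms by (simp add: T_def)
    next
      case False
      then have "u ^ 0 \<in> {u ^ j | j. j < e}" by blast
      then show ?thesis unfolding T_def by (rule span_base)
    qed
  next
    case (Suc n)
    then show ?case using mult_closed by simp
  qed
  then show ?thesis unfolding T_def .
qed

lemma power_degree_in_span_lower_powers:
  assumes "p \<noteq> 0" and "alg_eval scale p u = 0"
  shows "u ^ degree p \<in> span {u ^ j | j. j < degree p}"
proof -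
  let ?e = "degree p"
  let ?c = "lead_coeff p"
  have "0 = (\<Sum>j<Suc ?e. scale (coeff p j) (u ^ j))"
    using assms(2) by (simp add: alg_eval_def lessThan_Suc_atMost)
  then have lead_term: "scale ?c (u ^ ?e) = - (\<Sum>j<?e. scale (coeff p j) (u ^ j))"
    by (simp add: eq_neg_iff_add_eq_0 add.commute)
  have "u ^ ?e = scale (1 / ?c) (scale ?c (u ^ ?e))"
    using \<open>p \<noteq> 0\<close> by simp
  also have "\<dots> = scale (1 / ?c) (- (\<Sum>j<?e. scale (coeff p j) (u ^ j)))"
    by (simp only: lead_term)
  also have "\<dots> \<in> span {u ^ j | j. j < ?e}"
    by (intro span_scale span_neg span_sum span_base) auto
  finally show ?thesis .
qed

lemma algebraic_power_in_span_lower_powers: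
  assumes "algebraic_deg_le scale d u"
  shows "u ^ n \<in> span {u ^ j | j. j < d}"
proof -
  obtain p where p: "p \<noteq> 0" "degree p \<le> d" "alg_eval scale p u = 0"
    using assms unfolding algebraic_deg_le_def by blast
  have "u ^ n \<in> span {u ^ j | j. j < degree p}"
    by (rule power_in_span_lower_powers[OF power_degree_in_span_lower_powers[OF p(1,3)]])
  also have "\<dots> \<subseteq> span {u ^ j | j. j < d}"
    using p(2) by (intro span_mono) auto
  finally show ?thesis .
qed

lemma subspace_Ple: "subspace (Ple scale m a r)"
proof (rule subspaceI)
  show "0 \<in> Ple scale m a r"
    unfolding Ple_def Pn_def by (intro CollectI exI[where x="\<lambda>_. 0"]) (simp add: span_zero)
next
  fix x y assume "x \<in> Ple scale m a r" "y \<in> Ple scale m a r"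
  then obtain f g where "\<forall>n\<le>r. f n \<in> Pn scale m a n" "x = (\<Sum>n\<le>r. f n)"
    and "\<forall>n\<le>r. g n \<in> Pn scale m a n" "y = (\<Sum>n\<le>r. g n)"
    unfolding Ple_def by auto
  then show "x + y \<in> Ple scale m a r"
    unfolding Ple_def
    by (intro CollectI exI[where x="\<lambda>n. f n + g n"]) (auto simp: Pn_def span_add sum.distrib)
next
  fix c x assume "x \<in> Ple scale m a r"
  then obtain f where "\<forall>n\<le>r. f n \<in> Pn scale m a n" "x = (\<Sum>n\<le>r. f n)"
    unfolding Ple_def by auto
  then show "scale c x \<in> Ple scale m a r"
    unfolding Ple_def
    by (intro CollectI exI[where x="\<lambda>n. scale c (f n)"]) (auto simp: Pn_def span_scale scale_sum_right)
qed

lemma Pn_subset_Ple: "n \<le> r \<Longrightarrow> Pn scale m a n \<subseteq> Ple scale m a r"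
proof
  fix x assume "n \<le> r" and x: "x \<in> Pn scale m a n"
  show "x \<in> Ple scale m a r"
    unfolding Ple_def
  proof (intro CollectI exI[where x="\<lambda>k. if k = n then x else 0"] conjI allI impI)
    fix k
    show "(if k = n then x else 0) \<in> Pn scale m a k"
      using x by (auto simp: Pn_def span_zero)
  qed (use \<open>n \<le> r\<close> in simp)
qed

lemma power_linear_combination_in_Pn: "(\<Sum>j<m. scale (\<alpha> j) (a j)) ^ n \<in> Pn scale m a n"
  unfolding power_linear_combination_pnc Pn_def
  by (intro span_sum span_scale span_base) (auto simp: degree_exps_def)

lemma Pn_subset_subspace_if_pnc_in:
  assumes W: "subspace W" and "\<And>i. i \<in> degree_exps m n \<Longrightarrow> pnc m i a \<in> W"
  shows "Pn scale m a n \<subseteq> W"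
  unfolding Pn_def
proof (rule span_minimal[OF _ W], safe)
  fix i :: "nat \<Rightarrow> nat" assume "n = (\<Sum>j<m. i j)"
  then have "(\<lambda>j. if j < m then i j else 0) \<in> degree_exps m n"
    by (simp add: degree_exps_def)
  then have "pnc m (\<lambda>j. if j < m then i j else 0) a \<in> W"
    by (rule assms(2))
  moreover have "words m (\<lambda>j. if j < m then i j else 0) = words m i"
    by (rule words_cong) simp
  ultimately show "pnc m i a \<in> W"
    by (simp add: pnc_def)
qed

lemma Pn_subset_Ple_if_algebraic:
  assumes "finite (S :: 'k set)" and "card S = Suc D"
    and algebraic: "\<And>\<alpha>. algebraic_deg_le scale d (\<Sum>j<m. scale (\<alpha> j) (a j))"
  shows "Pn scale m a D \<subseteq> Ple scale m a (d - 1)"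
proof (rule Pn_subset_subspace_if_pnc_in[OF subspace_Ple])
  let ?W = "Ple scale m a (d - 1)"
  have power_D_in_W: "(\<Sum>j<m. scale (\<alpha> j) (a j)) ^ D \<in> ?W" for \<alpha>
  proof -
    have "(\<Sum>j<m. scale (\<alpha> j) (a j)) ^ k \<in> ?W" if "k < d" for k
    proof -
      have "Pn scale m a k \<subseteq> ?W"
        using that by (intro Pn_subset_Ple) simp
      then show ?thesis
        using power_linear_combination_in_Pn by blast
    qed
    then have "span {(\<Sum>j<m. scale (\<alpha> j) (a j)) ^ k | k. k < d} \<subseteq> ?W"
      by (intro span_minimal[OF _ subspace_Ple]) auto
    then show ?thesis
      using algebraic_power_in_span_lower_powers[OF algebraic] by blast
  qed
  define v where "v i = (if i \<in> degree_exps m D then pnc m i a else 0)" for i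
  have power_D_expansion: "(\<Sum>i\<in>bounded_exps D m. scale (monomial_value \<alpha> i m) (v i))
      = (\<Sum>j<m. scale (\<alpha> j) (a j)) ^ D" for \<alpha>
    unfolding power_linear_combination_pnc
    by (rule sum.mono_neutral_cong_right[OF finite_bounded_exps degree_exps_subset_bounded_exps])
      (auto simp: v_def)
  have "v i \<in> ?W" if "i \<in> bounded_exps D m" for i
  proof (rule multivariate_coeff_in_subspace[OF subspace_Ple assms(1,2), where v=v and m=m])
    show "\<forall>\<alpha>. (\<Sum>i\<in>bounded_exps D m. scale (monomial_value \<alpha> i m) (v i)) \<in> ?W"
      unfolding power_D_expansion using power_D_in_W by blast
  qed (rule that)
  then show "pnc m i a \<in> ?W" if "i \<in> degree_exps m D" for i
    using that degree_exps_subset_bounded_exps by (force simp: v_def)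
qed

end

lemma obtain_finite_subset_card:
  assumes "infinite (UNIV :: 'k set) \<or> n \<le> card (UNIV :: 'k set)"
  obtains S :: "'k set" where "finite S" "card S = n"
proof (cases "finite (UNIV :: 'k set)")
  case True
  then show ?thesis using assms obtain_subset_with_card_n that by metis
next
  case False
  then show ?thesis using infinite_arbitrarily_large that by blast
qed

theorem lemma3p2:
  fixes scale :: "'k::field \<Rightarrow> 'b::ring_1 \<Rightarrow> 'b"
    and a :: "nat \<Rightarrow> 'b" and m d D :: nat
  assumes "is_algebra scale"
    and "1 \<le> d" and "d \<le> D"
    and "infinite (UNIV :: 'k set) \<or> D + 1 \<le> card (UNIV :: 'k set)"
    and "\<forall>\<alpha> :: nat \<Rightarrow> 'k. algebraic_deg_le scale d (\<Sum>j<m. scale (\<alpha> j) (a j))"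
  shows "Pn scale m a D \<subseteq> Ple scale m a (d - 1)"
proof -
  interpret field_algebra scale
    using assms(1) by (rule field_algebra_if_is_algebra)
  obtain S :: "'k set" where "finite S" "card S = Suc D"
    using obtain_finite_subset_card[of "Suc D"] assms(4) by auto
  then show ?thesis
    using Pn_subset_Ple_if_algebraic assms(5) by blast
qed

end
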